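(* Let $I$ be an interval and let $f:I\rightarrow\mathbb{R}$ be continuous on $I$ and of class $C^1$ on the interior $\operatorname{int}I$. Then the following are equivalent: (i) $f$ is $3$-convex; (ii) $f'\left(\frac{a+b}{2}\right)\leq\frac{f(b)-f(a)}{b-a}$ for all $a<b$ in $\operatorname{int}I$; (iii) $\frac{f(b)-f(a)}{b-a}\leq\frac{1}{2}\left(\frac{f'(a)+f'(b)}{2}+f'\left(\frac{a+b}{2}\right)\right)$ for all $a<b$ in $\operatorname{int}I$.
   Context: A function $f$ defined on an interval $I$ is called $3$-convex if for all $x_0<x_1<x_2<x_3$ in $I$ the third-order divided difference $[x_0,x_1,x_2,x_3;f]=\sum_{j=0}^{3}\frac{f(x_j)}{\prod_{k\neq j}(x_j-x_k)}$ is nonnegative. *)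

theory Defs
  imports "HOL-Analysis.Analysis"
begin

definition divdiff3 :: "(real \<Rightarrow> real) \<Rightarrow> real \<Rightarrow> real \<Rightarrow> real \<Rightarrow> real \<Rightarrow> real" where
  "divdiff3 f x0 x1 x2 x3 =
     (let xs = [x0, x1, x2, x3] in
      (\<Sum>j<4. f (xs ! j) / (\<Prod>k\<in>{..<4} - {j}. (xs ! j - xs ! k))))"

definition convex3_on :: "real set \<Rightarrow> (real \<Rightarrow> real) \<Rightarrow> bool" where
  "convex3_on I f \<longleftrightarrow>
     (\<forall>x0\<in>I. \<forall>x1\<in>I. \<forall>x2\<in>I. \<forall>x3\<in>I.
        x0 < x1 \<and> x1 < x2 \<and> x2 < x3 \<longrightarrow> divdiff3 f x0 x1 x2 x3 \<ge> 0)"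

end

theory Submission
  imports Defs
begin

text \<open>
  (i) \<Longrightarrow> (ii): for a 3-convex \<open>f\<close> the symmetric difference quotient
  \<open>(f (m + t) - f (m - t)) / (2 t)\<close> is nondecreasing in \<open>t\<close> and tends to \<open>f' m\<close> as \<open>t \<rightarrow> 0\<close>.

  (ii) \<Longrightarrow> \<open>f'\<close> convex: suppose \<open>f'\<close> exceeds one of its chords, let \<open>\<phi>\<close> be the excess and \<open>c\<close> a
  maximum point of \<open>\<phi>\<close>. On the largest interval \<open>[p, q]\<close> centred at \<open>c\<close> inside the chord's
  interval, \<open>\<phi> \<le> \<phi> c\<close>, while (ii) gives \<open>\<phi> c (q - p) \<le> \<integral>\<^sub>p\<^sup>q \<phi>\<close>. So \<open>\<phi>\<close> is constant on
  \<open>[p, q]\<close>, which fails at the end of \<open>[p, q]\<close> where \<open>\<phi> = 0\<close>.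

  \<open>f'\<close> convex \<Longrightarrow> (i): the divided difference is \<open>e x\<^sub>3 / ((x\<^sub>3 - x\<^sub>0) (x\<^sub>3 - x\<^sub>1) (x\<^sub>3 - x\<^sub>2))\<close>,
  where \<open>e = f - P\<close> and \<open>P\<close> is the quadratic interpolating \<open>f\<close> at \<open>x\<^sub>0, x\<^sub>1, x\<^sub>2\<close>. By Rolle,
  \<open>e' = f' - P'\<close>, a convex function minus an affine one, vanishes twice before \<open>x\<^sub>2\<close>; hence it
  is nonnegative beyond \<open>x\<^sub>2\<close>, and \<open>e x\<^sub>3 \<ge> e x\<^sub>2 = 0\<close>.

  \<open>f'\<close> convex \<Longrightarrow> (iii) is a Hermite--Hadamard type estimate.

  (iii) \<Longrightarrow> (ii): for \<open>R t = f (m + t) - f (m - t) - 2 t f' m\<close>, (iii) at \<open>m \<plusminus> t\<close> reads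
  \<open>2 R \<le> t R'\<close>, so \<open>R t / t\<^sup>2\<close> is nondecreasing. If \<open>f'\<close> is differentiable at \<open>m\<close>, then
  \<open>R t / t\<^sup>2 \<rightarrow> 0\<close> and hence \<open>R \<ge> 0\<close>, which is (ii). In general this applies to the averages
  \<open>(G (x + \<delta>) - G x) / \<delta>\<close> of \<open>f\<close>, \<open>G\<close> a primitive of \<open>f\<close>: they inherit (iii), their
  derivatives are difference quotients of \<open>f\<close> and hence differentiable, and (ii) for them tends
  to (ii) for \<open>f\<close> as \<open>\<delta> \<rightarrow> 0\<close>.
\<close>

section \<open>Divided differences\<close>

definition lagrange_quadratic :: "(real \<Rightarrow> real) \<Rightarrow> real \<Rightarrow> real \<Rightarrow> real \<Rightarrow> real \<Rightarrow> real" where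
  "lagrange_quadratic f x0 x1 x2 x =
     f x0 / ((x0 - x1) * (x0 - x2)) * ((x - x1) * (x - x2)) +
     f x1 / ((x1 - x0) * (x1 - x2)) * ((x - x0) * (x - x2)) +
     f x2 / ((x2 - x0) * (x2 - x1)) * ((x - x0) * (x - x1))"

lemma lagrange_quadratic_nodes:
  assumes "distinct [x0, x1, x2]"
  shows "lagrange_quadratic f x0 x1 x2 x0 = f x0" "lagrange_quadratic f x0 x1 x2 x1 = f x1"
    "lagrange_quadratic f x0 x1 x2 x2 = f x2"
  using assms by (simp_all add: lagrange_quadratic_def)

lemma lagrange_quadratic_has_affine_derivative:
  obtains A B where "\<And>x. (lagrange_quadratic f x0 x1 x2 has_real_derivative A + B * x) (at x)"
proof -
  define c0 c1 c2 where "c0 = f x0 / ((x0 - x1) * (x0 - x2))"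
    and "c1 = f x1 / ((x1 - x0) * (x1 - x2))" and "c2 = f x2 / ((x2 - x0) * (x2 - x1))"
  have P: "lagrange_quadratic f x0 x1 x2 =
      (\<lambda>x. c0 * ((x - x1) * (x - x2)) + c1 * ((x - x0) * (x - x2)) + c2 * ((x - x0) * (x - x1)))"
    by (simp add: lagrange_quadratic_def c0_def c1_def c2_def fun_eq_iff)
  show ?thesis
  proof
    fix x
    show "(lagrange_quadratic f x0 x1 x2 has_real_derivative
        - (c0 * (x1 + x2) + c1 * (x0 + x2) + c2 * (x0 + x1)) + 2 * (c0 + c1 + c2) * x) (at x)"
      unfolding P by (auto intro!: derivative_eq_intros simp: algebra_simps)
  qed
qed

lemma divdiff3_explicit:
  "divdiff3 f a b c d =
     f a / ((a - b) * (a - c) * (a - d)) + f b / ((b - a) * (b - c) * (b - d)) +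
     f c / ((c - a) * (c - b) * (c - d)) + f d / ((d - a) * (d - b) * (d - c))"
proof -
  have "{..<4::nat} = {0, 1, 2, 3}" by auto
  then show ?thesis
    by (simp add: divdiff3_def insert_Diff_if mult.assoc)
qed

lemma divdiff3_eq_interpolation_error:
  assumes "distinct [x0, x1, x2, x3]"
  shows "divdiff3 f x0 x1 x2 x3 =
    (f x3 - lagrange_quadratic f x0 x1 x2 x3) / ((x3 - x0) * (x3 - x1) * (x3 - x2))"
proof -
  define c0 c1 c2 where "c0 = f x0 / ((x0 - x1) * (x0 - x2))"
    and "c1 = f x1 / ((x1 - x0) * (x1 - x2))" and "c2 = f x2 / ((x2 - x0) * (x2 - x1))"
  define w where "w = (x3 - x0) * (x3 - x1) * (x3 - x2)"
  have "x3 - x0 \<noteq> 0" "x3 - x1 \<noteq> 0" "x3 - x2 \<noteq> 0"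
    using assms by auto
  then have "c0 * ((x3 - x1) * (x3 - x2)) / w = c0 / (x3 - x0)"
    "c1 * ((x3 - x0) * (x3 - x2)) / w = c1 / (x3 - x1)"
    "c2 * ((x3 - x0) * (x3 - x1)) / w = c2 / (x3 - x2)"
    by (simp_all add: w_def divide_simps)
  moreover have "f x0 / ((x0 - x1) * (x0 - x2) * (x0 - x3)) = - (c0 / (x3 - x0))"
    "f x1 / ((x1 - x0) * (x1 - x2) * (x1 - x3)) = - (c1 / (x3 - x1))"
    "f x2 / ((x2 - x0) * (x2 - x1) * (x2 - x3)) = - (c2 / (x3 - x2))"
    by (simp_all only: c0_def c1_def c2_def divide_divide_eq_left minus_divide_right
        mult_minus_right[symmetric] minus_diff_eq)
  ultimately show ?thesis
    unfolding divdiff3_explicit lagrange_quadratic_def c0_def[symmetric] c1_def[symmetric]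
      c2_def[symmetric] w_def[symmetric] diff_divide_distrib add_divide_distrib
    by linarith
qed

lemma divdiff3_symmetric:
  assumes "0 < t" "t < h"
  shows "divdiff3 f (m - h) (m - t) (m + t) (m + h) =
    ((f (m + h) - f (m - h)) / (2 * h) - (f (m + t) - f (m - t)) / (2 * t)) / (h\<^sup>2 - t\<^sup>2)"
proof -
  have "h\<^sup>2 - t\<^sup>2 > 0" using assms by (simp add: power_strict_mono)
  with assms show ?thesis
    by (simp add: divdiff3_explicit divide_simps) (simp add: power2_eq_square algebra_simps)
qed

section \<open>The midpoint inequality\<close>

lemma symmetric_quotient_tendsto:
  assumes "(f has_real_derivative D) (at m)"
  shows "((\<lambda>t. (f (m + t) - f (m - t)) / (2 * t)) \<longlongrightarrow> D) (at 0)"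
proof -
  have "((\<lambda>t. f (m + t) - f (m - t)) has_real_derivative D + D) (at 0)"
    using assms by (auto intro!: derivative_eq_intros DERIV_chain2[where f = f])
  then have "((\<lambda>t. (f (m + t) - f (m - t)) / t) \<longlongrightarrow> D + D) (at 0)"
    by (simp add: DERIV_def)
  then have "((\<lambda>t. (f (m + t) - f (m - t)) / t / 2) \<longlongrightarrow> (D + D) / 2) (at 0)"
    by (rule tendsto_divide[OF _ tendsto_const]) simp
  then show ?thesis
    by (simp add: mult.commute)
qed

lemma convex3_on_imp_deriv_midpoint_le_slope:
  assumes f: "convex3_on I f" and J: "connected J" "J \<subseteq> I"
    and der: "\<And>x. x \<in> J \<Longrightarrow> (f has_real_derivative g x) (at x)"
    and ab: "a \<in> J" "b \<in> J" "a < b"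
  shows "g ((a + b) / 2) \<le> (f b - f a) / (b - a)"
proof -
  define m h where "m = (a + b) / 2" and "h = (b - a) / 2"
  have "0 < h" and ab_mh: "a = m - h" "b = m + h"
    using ab by (simp_all add: m_def h_def field_simps)
  have sub: "{a..b} \<subseteq> J"
    using connected_contains_Icc[OF J(1) ab(1,2)] .
  have "(f (m + t) - f (m - t)) / (2 * t) \<le> (f (m + h) - f (m - h)) / (2 * h)"
    if "0 < t" "t < h" for t
  proof -
    have "{m - h, m - t, m + t, m + h} \<subseteq> {a..b}"
      using that unfolding ab_mh by auto
    then have "{m - h, m - t, m + t, m + h} \<subseteq> I"
      using sub J(2) by blast
    then have "0 \<le> divdiff3 f (m - h) (m - t) (m + t) (m + h)"
      by (intro f[unfolded convex3_on_def, rule_format]) (use that in auto)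
    moreover have "0 < h\<^sup>2 - t\<^sup>2"
      using that by (simp add: power_strict_mono)
    ultimately have "0 \<le> (f (m + h) - f (m - h)) / (2 * h) - (f (m + t) - f (m - t)) / (2 * t)"
      unfolding divdiff3_symmetric[OF that] zero_le_divide_iff by linarith
    then show ?thesis
      by linarith
  qed
  then have ev: "\<forall>\<^sub>F t in at_right 0.
      (f (m + t) - f (m - t)) / (2 * t) \<le> (f (m + h) - f (m - h)) / (2 * h)"
    unfolding eventually_at_right_field using \<open>0 < h\<close> by (intro exI[of _ h]) auto
  have "m \<in> J"
    using sub ab by (auto simp: m_def)
  then have "((\<lambda>t. (f (m + t) - f (m - t)) / (2 * t)) \<longlongrightarrow> g m) (at_right 0)"
    using der by (blast intro: Lim_at_imp_Lim_at_within[OF symmetric_quotient_tendsto])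
  then have "g m \<le> (f (m + h) - f (m - h)) / (2 * h)"
    using ev by (rule tendsto_upperbound) simp
  moreover have "(a + b) / 2 = m" "b - a = 2 * h"
    by (simp_all add: m_def h_def)
  ultimately show ?thesis
    using ab_mh by simp
qed

lemma deriv_eq_0_if_nonpos_and_endpoints_le:
  fixes \<Theta> \<Theta>' :: "real \<Rightarrow> real"
  assumes der: "\<And>t. t \<in> {p..q} \<Longrightarrow> (\<Theta> has_real_derivative \<Theta>' t) (at t)"
    and nonpos: "\<And>t. t \<in> {p..q} \<Longrightarrow> \<Theta>' t \<le> 0"
    and "\<Theta> p \<le> \<Theta> q" and t: "t \<in> {p<..<q}"
  shows "\<Theta>' t = 0"
proof -
  have antimono: "\<Theta> y \<le> \<Theta> x" if "p \<le> x" "x \<le> y" "y \<le> q" for x y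
    by (rule deriv_nonpos_imp_antimono[of x y \<Theta> \<Theta>']) (use der nonpos that in auto)
  have const: "\<Theta> y = \<Theta> t" if "y \<in> {p..q}" for y
  proof -
    have "\<Theta> q \<le> \<Theta> y" "\<Theta> y \<le> \<Theta> p" "\<Theta> q \<le> \<Theta> t" "\<Theta> t \<le> \<Theta> p"
      using antimono that t by auto
    with \<open>\<Theta> p \<le> \<Theta> q\<close> show ?thesis
      by linarith
  qed
  show ?thesis
  proof (rule DERIV_local_const[OF der])
    show "t \<in> {p..q}" "0 < min (t - p) (q - t)"
      using t by auto
    show "\<forall>y. \<bar>t - y\<bar> < min (t - p) (q - t) \<longrightarrow> \<Theta> t = \<Theta> y"
    proof (intro allI impI)
      fix y
      assume "\<bar>t - y\<bar> < min (t - p) (q - t)"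
      then have "y \<in> {p..q}"
        by (auto simp: abs_less_iff)
      then show "\<Theta> t = \<Theta> y"
        by (rule const[symmetric])
    qed
  qed
qed

lemma deriv_const_if_midpoint_max_le_slope:
  fixes F \<phi> :: "real \<Rightarrow> real"
  assumes "p < q"
    and der: "\<And>t. t \<in> {p..q} \<Longrightarrow> (F has_real_derivative \<phi> t) (at t)"
    and cont: "continuous_on {p..q} \<phi>"
    and max: "\<And>t. t \<in> {p..q} \<Longrightarrow> \<phi> t \<le> \<phi> ((p + q) / 2)"
    and mid: "\<phi> ((p + q) / 2) * (q - p) \<le> F q - F p"
    and t: "t \<in> {p..q}"
  shows "\<phi> t = \<phi> ((p + q) / 2)"
proof -
  define M where "M = \<phi> ((p + q) / 2)"
  define \<Theta> where "\<Theta> t = F t - M * t" for t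
  have d\<Theta>: "(\<Theta> has_real_derivative \<phi> t - M) (at t)" if "t \<in> {p..q}" for t
    unfolding \<Theta>_def[abs_def] using der[OF that] by (auto intro!: derivative_eq_intros)
  have "\<Theta> p \<le> \<Theta> q"
    using mid by (simp add: \<Theta>_def M_def algebra_simps)
  have \<phi>M: "\<phi> s = M" if "s \<in> {p<..<q}" for s
  proof -
    have "\<phi> s - M = 0"
      by (rule deriv_eq_0_if_nonpos_and_endpoints_le[OF d\<Theta> _ \<open>\<Theta> p \<le> \<Theta> q\<close> that])
        (use max in \<open>auto simp: M_def\<close>)
    then show ?thesis
      by simp
  qed
  have closure: "closure {p<..<q} = {p..q}"
    using \<open>p < q\<close> by simp
  have "continuous_on (closure {p<..<q}) \<phi>" "t \<in> closure {p<..<q}"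
    unfolding closure using cont t by auto
  then show ?thesis
    using continuous_constant_on_closure[where S = "{p<..<q}" and f = \<phi> and a = M] \<phi>M
    unfolding M_def by blast
qed

lemma centred_interval_at_max:
  fixes \<phi> :: "real \<Rightarrow> real"
  assumes cont: "continuous_on {x..z} \<phi>" and "\<phi> x = 0" "\<phi> z = 0" and y: "y \<in> {x..z}" "0 < \<phi> y"
  obtains p q where "x \<le> p" "p < q" "q \<le> z" "\<phi> p = 0 \<or> \<phi> q = 0"
    "\<And>t. t \<in> {x..z} \<Longrightarrow> \<phi> t \<le> \<phi> ((p + q) / 2)" "0 < \<phi> ((p + q) / 2)"
proof -
  obtain c where c: "c \<in> {x..z}" and max: "\<And>t. t \<in> {x..z} \<Longrightarrow> \<phi> t \<le> \<phi> c"
    using continuous_attains_sup[OF compact_Icc _ cont] y by auto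
  have "0 < \<phi> c"
    using max[OF y(1)] y(2) by simp
  then have "x < c" "c < z"
    using c \<open>\<phi> x = 0\<close> \<open>\<phi> z = 0\<close> by (auto simp: order_le_less)
  show ?thesis
  proof (cases "c - x \<le> z - c")
    case True
    then show ?thesis
      using that[of x "2 * c - x"] \<open>x < c\<close> \<open>\<phi> x = 0\<close> max \<open>0 < \<phi> c\<close> by auto
  next
    case False
    then show ?thesis
      using that[of "2 * c - z" z] \<open>c < z\<close> \<open>\<phi> z = 0\<close> max \<open>0 < \<phi> c\<close> by auto
  qed
qed

lemma deriv_le_chord_if_deriv_midpoint_le_slope:
  fixes f g :: "real \<Rightarrow> real"
  assumes J: "connected J"
    and der: "\<And>x. x \<in> J \<Longrightarrow> (f has_real_derivative g x) (at x)"
    and g: "continuous_on J g"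
    and mid: "\<And>a b. a \<in> J \<Longrightarrow> b \<in> J \<Longrightarrow> a < b \<Longrightarrow> g ((a + b) / 2) \<le> (f b - f a) / (b - a)"
    and xz: "x \<in> J" "z \<in> J" "x < z" and y: "y \<in> {x..z}"
  shows "g y \<le> g x + (g z - g x) / (z - x) * (y - x)"
proof (rule ccontr)
  define s where "s = (g z - g x) / (z - x)"
  define \<phi> where "\<phi> t = g t - (g x + s * (t - x))" for t
  assume "\<not> ?thesis"
  then have "0 < \<phi> y"
    by (simp add: \<phi>_def s_def)
  have "\<phi> x = 0" "\<phi> z = 0"
    using xz by (simp_all add: \<phi>_def s_def)
  have sub: "{x..z} \<subseteq> J"
    using connected_contains_Icc J xz by blast
  have cont: "continuous_on {x..z} \<phi>"
    unfolding \<phi>_def by (intro continuous_intros continuous_on_subset[OF g sub])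
  obtain p q where pq: "x \<le> p" "p < q" "q \<le> z" and "\<phi> p = 0 \<or> \<phi> q = 0"
    and max: "\<And>t. t \<in> {x..z} \<Longrightarrow> \<phi> t \<le> \<phi> ((p + q) / 2)" and "0 < \<phi> ((p + q) / 2)"
    using centred_interval_at_max[OF cont \<open>\<phi> x = 0\<close> \<open>\<phi> z = 0\<close> y \<open>0 < \<phi> y\<close>] by blast
  define c where "c = (p + q) / 2"
  define F where "F t = f t - (g x * t + s * (t - x)\<^sup>2 / 2)" for t
  have "\<phi> t = \<phi> c" if "t \<in> {p..q}" for t
    unfolding c_def
  proof (rule deriv_const_if_midpoint_max_le_slope[OF pq(2) _ _ _ _ that])
    show "(F has_real_derivative \<phi> u) (at u)" if "u \<in> {p..q}" for u
    proof -
      have "u \<in> J"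
        using sub pq that by auto
      then show ?thesis
        unfolding F_def[abs_def] \<phi>_def
        by (auto intro!: derivative_eq_intros der simp: field_simps power2_eq_square)
    qed
    show "continuous_on {p..q} \<phi>"
      using cont by (rule continuous_on_subset) (use pq in auto)
    show "\<phi> u \<le> \<phi> ((p + q) / 2)" if "u \<in> {p..q}" for u
      using max[of u] that pq by auto
    have "p \<in> J" "q \<in> J"
      using sub pq by auto
    with mid pq(2) have "g c * (q - p) \<le> f q - f p"
      unfolding c_def by (simp add: pos_le_divide_eq)
    moreover have "F q - F p - \<phi> c * (q - p) = f q - f p - g c * (q - p)"
      unfolding F_def \<phi>_def c_def by (simp add: power2_eq_square field_simps)
    ultimately show "\<phi> ((p + q) / 2) * (q - p) \<le> F q - F p"
      unfolding c_def[symmetric] by linarith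
  qed
  from this[of p] this[of q] pq \<open>\<phi> p = 0 \<or> \<phi> q = 0\<close> \<open>0 < \<phi> ((p + q) / 2)\<close> show False
    by (auto simp: c_def)
qed

lemma deriv_midpoint_le_slope_imp_convex_deriv:
  fixes f g :: "real \<Rightarrow> real"
  assumes J: "connected J"
    and der: "\<And>x. x \<in> J \<Longrightarrow> (f has_real_derivative g x) (at x)"
    and g: "continuous_on J g"
    and mid: "\<And>a b. a \<in> J \<Longrightarrow> b \<in> J \<Longrightarrow> a < b \<Longrightarrow> g ((a + b) / 2) \<le> (f b - f a) / (b - a)"
  shows "convex_on J g"
proof (rule convex_on_linorderI)
  show "convex J"
    using J by (simp add: is_interval_connected_1[symmetric] is_interval_convex_1)
  fix t x y :: real
  assume t: "0 < t" "t < 1" and xy: "x \<in> J" "y \<in> J" "x < y"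
  have "t * (y - x) \<le> y - x"
    using t xy by (simp add: mult_left_le_one_le)
  then have c: "(1 - t) *\<^sub>R x + t *\<^sub>R y \<in> {x..y}"
    using t xy by (simp add: algebra_simps)
  have "(g y - g x) / (y - x) * ((1 - t) *\<^sub>R x + t *\<^sub>R y - x) = t * (g y - g x)"
    using xy by (simp add: field_simps)
  with deriv_le_chord_if_deriv_midpoint_le_slope[OF J der g mid xy c]
  show "g ((1 - t) *\<^sub>R x + t *\<^sub>R y) \<le> (1 - t) * g x + t * g y"
    by (simp add: algebra_simps)
qed

section \<open>Convex derivatives\<close>

lemma nonneg_if_three_zeros_and_deriv_convex_minus_affine:
  fixes e g :: "real \<Rightarrow> real"
  assumes lt: "x0 < x1" "x1 < x2" "x2 < x3"
    and zeros: "e x0 = 0" "e x1 = 0" "e x2 = 0"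
    and cont: "continuous_on {x0..x3} e"
    and de: "\<And>x. x \<in> {x0<..<x3} \<Longrightarrow> (e has_real_derivative g x - (A + B * x)) (at x)"
    and g: "convex_on {x0<..<x3} g"
  shows "0 \<le> e x3"
proof -
  have diff: "e differentiable (at x)" if "x0 < x" "x < x3" for x
    using de that real_differentiable_def by fastforce
  have touch: "\<exists>\<xi>. u < \<xi> \<and> \<xi> < v \<and> g \<xi> = A + B * \<xi>"
    if "x0 \<le> u" "u < v" "v \<le> x3" "e u = 0" "e v = 0" for u v
  proof -
    have "\<exists>\<xi>. u < \<xi> \<and> \<xi> < v \<and> (e has_real_derivative 0) (at \<xi>)"
    proof (rule Rolle)
      show "continuous_on {u..v} e"
        using continuous_on_subset[OF cont] that by auto
    qed (use that diff in auto)
    then obtain \<xi> where "u < \<xi>" "\<xi> < v" "(e has_real_derivative 0) (at \<xi>)"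
      by blast
    moreover have "\<xi> \<in> {x0<..<x3}"
      using that \<open>u < \<xi>\<close> \<open>\<xi> < v\<close> by auto
    ultimately show ?thesis
      using DERIV_unique[OF _ de] by force
  qed
  obtain \<xi>1 \<xi>2 where \<xi>: "x0 < \<xi>1" "\<xi>1 < x1" "x1 < \<xi>2" "\<xi>2 < x2"
    and g\<xi>: "g \<xi>1 = A + B * \<xi>1" "g \<xi>2 = A + B * \<xi>2"
    using touch[of x0 x1] touch[of x1 x2] lt zeros by auto
  obtain l \<zeta> where \<zeta>: "x2 < \<zeta>" "\<zeta> < x3" "(e has_real_derivative l) (at \<zeta>)"
    and mvt: "e x3 - e x2 = (x3 - x2) * l"
    using MVT[of x2 x3 e] lt continuous_on_subset[OF cont] diff by auto
  then have "l = g \<zeta> - (A + B * \<zeta>)"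
    using DERIV_unique[OF _ de] lt by force
  moreover have "\<xi>1 \<in> {x0<..<x3}" "\<zeta> \<in> {x0<..<x3}" "\<xi>1 < \<xi>2" "\<xi>2 < \<zeta>"
    using \<xi> \<zeta> lt by auto
  then have "(g \<xi>1 - g \<xi>2) / (\<xi>1 - \<xi>2) \<le> (g \<xi>1 - g \<zeta>) / (\<xi>1 - \<zeta>)"
    by (rule convex_on_slope_le(1)[OF g])
  with g\<xi> \<open>\<xi>1 < \<xi>2\<close> \<open>\<xi>2 < \<zeta>\<close> have "(\<xi>2 - \<xi>1) * (A + B * \<zeta>) \<le> (\<xi>2 - \<xi>1) * g \<zeta>"
    by (simp add: field_simps)
  with \<open>\<xi>1 < \<xi>2\<close> have "A + B * \<zeta> \<le> g \<zeta>"
    by simp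
  ultimately show "0 \<le> e x3"
    using mvt zeros lt by simp
qed

lemma convex_deriv_imp_convex3_on:
  assumes I: "connected I" and f: "continuous_on I f"
    and der: "\<And>x. x \<in> interior I \<Longrightarrow> (f has_real_derivative g x) (at x)"
    and g: "convex_on (interior I) g"
  shows "convex3_on I f"
  unfolding convex3_on_def
proof (intro ballI impI, elim conjE)
  fix x0 x1 x2 x3
  assume I4: "x0 \<in> I" "x1 \<in> I" "x2 \<in> I" "x3 \<in> I" and lt: "x0 < x1" "x1 < x2" "x2 < x3"
  define e where "e x = f x - lagrange_quadratic f x0 x1 x2 x" for x
  obtain A B where dP: "\<And>x. (lagrange_quadratic f x0 x1 x2 has_real_derivative A + B * x) (at x)"
    by (metis lagrange_quadratic_has_affine_derivative)
  have "{x0..x3} \<subseteq> I"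
    using connected_contains_Icc[OF I I4(1,4)] .
  then have sub: "{x0<..<x3} \<subseteq> interior I"
    using interior_mono by (metis interior_atLeastAtMost_real)
  have "0 \<le> e x3"
  proof (rule nonneg_if_three_zeros_and_deriv_convex_minus_affine[OF lt])
    show "e x0 = 0" "e x1 = 0" "e x2 = 0"
      using lt by (simp_all add: e_def lagrange_quadratic_nodes)
    have "continuous_on {x0..x3} (lagrange_quadratic f x0 x1 x2)"
      using DERIV_isCont[OF dP] by (simp add: continuous_at_imp_continuous_on)
    then show "continuous_on {x0..x3} e"
      unfolding e_def[abs_def] using continuous_on_subset[OF f \<open>{x0..x3} \<subseteq> I\<close>]
      by (intro continuous_on_diff)
    show "(e has_real_derivative g x - (A + B * x)) (at x)" if "x \<in> {x0<..<x3}" for x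
      unfolding e_def[abs_def] using sub that by (intro DERIV_diff der dP) auto
    show "convex_on {x0<..<x3} g"
      using g sub by (rule convex_on_subset) simp
  qed
  then show "0 \<le> divdiff3 f x0 x1 x2 x3"
    using lt by (simp add: divdiff3_eq_interpolation_error e_def)
qed

lemma convex_on_symmetric_excess_le:
  fixes g :: "real \<Rightarrow> real"
  assumes g: "convex_on J g" and sub: "{m - h..m + h} \<subseteq> J"
    and "0 < h" "0 \<le> s" "s \<le> h"
  shows "g (m + s) + g (m - s) - 2 * g m \<le> s / h * (g (m + h) + g (m - h) - 2 * g m)"
proof -
  have "m \<in> J" "m + h \<in> J" "m - h \<in> J"
    using sub \<open>0 < h\<close> by auto
  moreover have "(1 - s / h) * m + s / h * (m + h) = m + s"
    "(1 - s / h) * m + s / h * (m - h) = m - s"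
    using \<open>0 < h\<close> by (simp_all add: field_simps)
  ultimately have "g (m + s) \<le> (1 - s / h) * g m + s / h * g (m + h)"
    "g (m - s) \<le> (1 - s / h) * g m + s / h * g (m - h)"
    using convex_onD[OF g, of "s / h" m "m + h"] convex_onD[OF g, of "s / h" m "m - h"] assms
    by simp_all
  then have "g (m + s) + g (m - s) - 2 * g m
      \<le> ((1 - s / h) * g m + s / h * g (m + h)) + ((1 - s / h) * g m + s / h * g (m - h)) - 2 * g m"
    by (intro diff_right_mono add_mono)
  also have "\<dots> = s / h * (g (m + h) + g (m - h) - 2 * g m)"
    by (simp add: algebra_simps)
  finally show ?thesis .
qed

lemma convex_deriv_imp_slope_le_simpson:
  assumes J: "connected J"
    and der: "\<And>x. x \<in> J \<Longrightarrow> (f has_real_derivative g x) (at x)"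
    and g: "convex_on J g"
    and ab: "a \<in> J" "b \<in> J" "a < b"
  shows "(f b - f a) / (b - a) \<le> 1 / 2 * ((g a + g b) / 2 + g ((a + b) / 2))"
proof -
  define m h where "m = (a + b) / 2" and "h = (b - a) / 2"
  have "0 < h" and ab_mh: "a = m - h" "b = m + h"
    using ab by (simp_all add: m_def h_def field_simps)
  have sub: "{m - h..m + h} \<subseteq> J"
    using connected_contains_Icc[OF J ab(1,2)] unfolding ab_mh .
  define \<psi> where "\<psi> s = g (m + s) + g (m - s) - 2 * g m" for s
  have \<psi>: "\<psi> s \<le> s / h * \<psi> h" if "0 \<le> s" "s \<le> h" for s
    using convex_on_symmetric_excess_le[OF g sub \<open>0 < h\<close> that] unfolding \<psi>_def .
  define \<Theta> where "\<Theta> s = f (m + s) - f (m - s) - 2 * g m * s - \<psi> h / (2 * h) * s\<^sup>2" for s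
  have d\<Theta>: "(\<Theta> has_real_derivative \<psi> s - s / h * \<psi> h) (at s)" if "s \<in> {0..h}" for s
  proof -
    have "m + s \<in> J" "m - s \<in> J"
      using sub that by auto
    then have "(\<Theta> has_real_derivative g (m + s) + g (m - s) - 2 * g m - \<psi> h / (2 * h) * (2 * s)) (at s)"
      unfolding \<Theta>_def[abs_def] using \<open>0 < h\<close>
      by (auto intro!: derivative_eq_intros DERIV_chain2[where f = f] der)
    moreover have "g (m + s) + g (m - s) - 2 * g m - \<psi> h / (2 * h) * (2 * s) = \<psi> s - s / h * \<psi> h"
      using \<open>0 < h\<close> by (simp add: \<psi>_def)
    ultimately show ?thesis
      by simp
  qed
  have "\<Theta> h \<le> \<Theta> 0"
    by (rule deriv_nonpos_imp_antimono[OF d\<Theta>]) (use \<psi> \<open>0 < h\<close> in auto)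
  moreover have "\<Theta> h = f (m + h) - f (m - h) - 2 * g m * h - \<psi> h / (2 * h) * h\<^sup>2"
    by (simp only: \<Theta>_def)
  moreover have "\<Theta> 0 = 0"
    by (simp add: \<Theta>_def)
  moreover have "\<psi> h / (2 * h) * h\<^sup>2 = h * \<psi> h / 2"
    using \<open>0 < h\<close> by (simp add: power2_eq_square)
  ultimately have "f (m + h) - f (m - h) \<le> 2 * g m * h + h * \<psi> h / 2"
    by linarith
  also have "\<dots> = 2 * h * (1 / 2 * ((g (m - h) + g (m + h)) / 2 + g m))"
    unfolding \<psi>_def by (simp add: field_simps)
  finally have "f (m + h) - f (m - h) \<le> 2 * h * (1 / 2 * ((g (m - h) + g (m + h)) / 2 + g m))" .
  moreover have "m + h - (m - h) = 2 * h" "(m - h + (m + h)) / 2 = m"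
    by simp_all
  ultimately show ?thesis
    unfolding ab_mh using \<open>0 < h\<close> by (simp add: pos_divide_le_eq mult.commute)
qed

section \<open>The Simpson defect\<close>

definition simpson_defect :: "(real \<Rightarrow> real) \<Rightarrow> (real \<Rightarrow> real) \<Rightarrow> real \<Rightarrow> real \<Rightarrow> real" where
  "simpson_defect F F' a b =
     (b - a) / 4 * (F' a + F' b) + (b - a) / 2 * F' ((a + b) / 2) - (F b - F a)"

lemma slope_le_simpson_iff_simpson_defect_nonneg:
  assumes "a < b"
  shows "(f b - f a) / (b - a) \<le> 1 / 2 * ((g a + g b) / 2 + g ((a + b) / 2)) \<longleftrightarrow>
    0 \<le> simpson_defect f g a b"
proof -
  have "(f b - f a) / (b - a) \<le> 1 / 2 * ((g a + g b) / 2 + g ((a + b) / 2)) \<longleftrightarrow>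
      f b - f a \<le> (b - a) * (1 / 2 * ((g a + g b) / 2 + g ((a + b) / 2)))"
    using assms by (simp add: divide_le_eq mult.commute)
  then show ?thesis
    unfolding simpson_defect_def by argo
qed

lemma difference_quotient_tendsto_at_right:
  assumes "(f has_real_derivative D) (at x)"
  shows "((\<lambda>h. (f (x + h) - f x) / h) \<longlongrightarrow> D) (at_right 0)"
  using assms unfolding DERIV_def by (rule Lim_at_imp_Lim_at_within)

lemma quotient_by_square_tendsto_0:
  fixes R R' :: "real \<Rightarrow> real"
  assumes der: "\<forall>\<^sub>F t in at_right 0. (R has_real_derivative R' t) (at t)"
    and R0: "(R \<longlongrightarrow> 0) (at_right 0)"
    and R'0: "((\<lambda>t. R' t / t) \<longlongrightarrow> 0) (at_right 0)"
  shows "((\<lambda>t. R t / (t * t)) \<longlongrightarrow> 0) (at_right 0)"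
proof (rule lhopital_right_0[OF R0 _ _ _ der])
  have pos: "\<forall>\<^sub>F t in at_right 0. 0 < (t::real)"
    by (rule eventually_at_right_less)
  show "\<forall>\<^sub>F t in at_right 0. t * t \<noteq> (0::real)"
    by (rule eventually_mono[OF pos]) simp
  show "\<forall>\<^sub>F t in at_right 0. 2 * t \<noteq> (0::real)"
    by (rule eventually_mono[OF pos]) simp
  show "\<forall>\<^sub>F t in at_right 0. ((\<lambda>t. t * t) has_real_derivative 2 * t) (at t)"
    by (intro always_eventually allI) (auto intro!: derivative_eq_intros)
  have "((\<lambda>t::real. t) \<longlongrightarrow> 0) (at_right 0)"
    by (rule tendsto_ident_at)
  from tendsto_mult[OF this this] show "((\<lambda>t::real. t * t) \<longlongrightarrow> 0) (at_right 0)"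
    by simp
  show "((\<lambda>t. R' t / (2 * t)) \<longlongrightarrow> 0) (at_right 0)"
    using tendsto_divide[OF R'0 tendsto_const, of 2] by (simp add: mult.commute)
qed

lemma nonneg_if_two_mul_le_mul_deriv:
  fixes R R' :: "real \<Rightarrow> real"
  assumes "0 < h"
    and der: "\<And>t. 0 < t \<Longrightarrow> t \<le> h \<Longrightarrow> (R has_real_derivative R' t) (at t)"
    and ineq: "\<And>t. 0 < t \<Longrightarrow> t \<le> h \<Longrightarrow> 2 * R t \<le> t * R' t"
    and R0: "(R \<longlongrightarrow> 0) (at_right 0)"
    and R'0: "((\<lambda>t. R' t / t) \<longlongrightarrow> 0) (at_right 0)"
  shows "0 \<le> R h"
proof -
  define Q where "Q t = R t / (t * t)" for t
  define Q' where "Q' t = (R' t * (t * t) - R t * (t + t)) / (t * t * (t * t))" for t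
  have Q_mono: "Q t \<le> Q h" if "0 < t" "t \<le> h" for t
  proof (rule deriv_nonneg_imp_mono[of t h Q Q'])
    fix u
    assume u: "u \<in> {t..h}"
    then have "0 < u" "u \<le> h"
      using that by auto
    then show "(Q has_real_derivative Q' u) (at u)"
      unfolding Q_def[abs_def] Q'_def using der by (auto intro!: derivative_eq_intros)
    have "R' u * (u * u) - R u * (u + u) = u * (u * R' u - 2 * R u)"
      by (simp add: algebra_simps)
    with ineq[OF \<open>0 < u\<close> \<open>u \<le> h\<close>] \<open>0 < u\<close> show "0 \<le> Q' u"
      unfolding Q'_def by simp
  qed (use that in auto)
  have ev: "\<forall>\<^sub>F t in at_right 0. 0 < t \<and> t \<le> h"
    unfolding eventually_at_right_field using \<open>0 < h\<close> by (intro exI[of _ h]) auto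
  then have "\<forall>\<^sub>F t in at_right 0. Q t \<le> Q h"
    by (rule eventually_mono) (simp add: Q_mono)
  moreover have "(Q \<longlongrightarrow> 0) (at_right 0)"
    unfolding Q_def
    by (rule quotient_by_square_tendsto_0[OF eventually_mono[OF ev] R0 R'0]) (simp add: der)
  ultimately have "0 \<le> R h / (h * h)"
    unfolding Q_def by (simp add: tendsto_upperbound)
  moreover have "0 < h * h"
    using \<open>0 < h\<close> by simp
  ultimately show ?thesis
    by (simp add: zero_le_divide_iff)
qed

lemma deriv_midpoint_le_slope_if_simpson_defect_nonneg:
  fixes F F' :: "real \<Rightarrow> real"
  assumes "0 < h"
    and F: "\<And>x. x \<in> {m - h..m + h} \<Longrightarrow> (F has_real_derivative F' x) (at x)"
    and F': "(F' has_real_derivative F'') (at m)"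
    and simpson: "\<And>t. 0 < t \<Longrightarrow> t \<le> h \<Longrightarrow> 0 \<le> simpson_defect F F' (m - t) (m + t)"
  shows "2 * h * F' m \<le> F (m + h) - F (m - h)"
proof -
  define R where "R t = F (m + t) - F (m - t) - 2 * t * F' m" for t
  define R' where "R' t = F' (m + t) + F' (m - t) - 2 * F' m" for t
  have dR: "(R has_real_derivative R' t) (at t)" if "0 \<le> t" "t \<le> h" for t
    using F[of "m + t"] F[of "m - t"] that unfolding R_def[abs_def] R'_def
    by (auto intro!: derivative_eq_intros DERIV_chain2[where f = F])
  have ineq: "2 * R t \<le> t * R' t" if "0 < t" "t \<le> h" for t
    using simpson[OF that] by (simp add: simpson_defect_def R_def R'_def algebra_simps)
  have "(R \<longlongrightarrow> R 0) (at 0)"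
    using DERIV_isCont[OF dR[of 0]] \<open>0 < h\<close> by (simp add: isCont_def)
  then have R0: "(R \<longlongrightarrow> 0) (at_right 0)"
    using Lim_at_imp_Lim_at_within by (fastforce simp: R_def)
  have "(R' has_real_derivative F'' - F'') (at 0)"
    using F' unfolding R'_def[abs_def] by (auto intro!: derivative_eq_intros DERIV_chain2[where f = F'])
  then have R'0: "((\<lambda>t. R' t / t) \<longlongrightarrow> 0) (at_right 0)"
    using difference_quotient_tendsto_at_right by (fastforce simp: R'_def)
  have "0 \<le> R h"
    by (rule nonneg_if_two_mul_le_mul_deriv[OF \<open>0 < h\<close> _ ineq R0 R'0]) (simp add: dR)
  then show ?thesis
    by (simp add: R_def)
qed

lemma simpson_defect_nonneg_average:
  fixes G f g :: "real \<Rightarrow> real"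
  assumes "0 < \<delta>" "a < b"
    and G: "\<And>x. x \<in> {a..b + \<delta>} \<Longrightarrow> (G has_real_derivative f x) (at x)"
    and f: "\<And>x. x \<in> {a..b + \<delta>} \<Longrightarrow> (f has_real_derivative g x) (at x)"
    and simpson: "\<And>\<sigma>. \<sigma> \<in> {0..\<delta>} \<Longrightarrow> 0 \<le> simpson_defect f g (a + \<sigma>) (b + \<sigma>)"
  shows "0 \<le> simpson_defect (\<lambda>x. (G (x + \<delta>) - G x) / \<delta>) (\<lambda>x. (f (x + \<delta>) - f x) / \<delta>) a b"
proof -
  define \<Psi> where "\<Psi> \<sigma> = simpson_defect (\<lambda>x. G (x + \<sigma>)) (\<lambda>x. f (x + \<sigma>)) a b" for \<sigma>
  have d\<Psi>: "(\<Psi> has_real_derivative simpson_defect f g (a + \<sigma>) (b + \<sigma>)) (at \<sigma>)"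
    if "\<sigma> \<in> {0..\<delta>}" for \<sigma>
  proof -
    have mem: "a + \<sigma> \<in> {a..b + \<delta>}" "b + \<sigma> \<in> {a..b + \<delta>}" "(a + b) / 2 + \<sigma> \<in> {a..b + \<delta>}"
      using that \<open>a < b\<close> by (auto simp: field_simps)
    have "(\<Psi> has_real_derivative (b - a) / 4 * (g (a + \<sigma>) + g (b + \<sigma>))
        + (b - a) / 2 * g ((a + b) / 2 + \<sigma>) - (f (b + \<sigma>) - f (a + \<sigma>))) (at \<sigma>)"
      unfolding \<Psi>_def simpson_defect_def
      by (auto intro!: derivative_eq_intros DERIV_chain2[where f = f] DERIV_chain2[where f = G]
          f[OF mem(1)] f[OF mem(2)] f[OF mem(3)] G[OF mem(1)] G[OF mem(2)])
    moreover have "b + \<sigma> - (a + \<sigma>) = b - a" "(a + \<sigma> + (b + \<sigma>)) / 2 = (a + b) / 2 + \<sigma>"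
      by (simp_all add: field_simps)
    ultimately show ?thesis
      by (simp only: simpson_defect_def)
  qed
  have "\<Psi> 0 \<le> \<Psi> \<delta>"
    by (rule deriv_nonneg_imp_mono[OF d\<Psi>]) (use simpson \<open>0 < \<delta>\<close> in auto)
  moreover have "simpson_defect (\<lambda>x. (G (x + \<delta>) - G x) / \<delta>) (\<lambda>x. (f (x + \<delta>) - f x) / \<delta>) a b
      = (\<Psi> \<delta> - \<Psi> 0) / \<delta>"
    using \<open>0 < \<delta>\<close> unfolding \<Psi>_def simpson_defect_def by (simp add: field_simps)
  ultimately show ?thesis
    using \<open>0 < \<delta>\<close> by simp
qed

lemma averaged_deriv_midpoint_le_slope:
  fixes G f g :: "real \<Rightarrow> real"
  assumes "0 < \<delta>" "a < b"
    and G: "\<And>x. x \<in> {a..b + \<delta>} \<Longrightarrow> (G has_real_derivative f x) (at x)"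
    and f: "\<And>x. x \<in> {a..b + \<delta>} \<Longrightarrow> (f has_real_derivative g x) (at x)"
    and simpson: "\<And>u v. a \<le> u \<Longrightarrow> u < v \<Longrightarrow> v \<le> b + \<delta> \<Longrightarrow> 0 \<le> simpson_defect f g u v"
  shows "(b - a) * ((f ((a + b) / 2 + \<delta>) - f ((a + b) / 2)) / \<delta>)
    \<le> (G (b + \<delta>) - G b) / \<delta> - (G (a + \<delta>) - G a) / \<delta>"
proof -
  define m h where "m = (a + b) / 2" and "h = (b - a) / 2"
  have "0 < h" and ab_mh: "a = m - h" "b = m + h"
    using \<open>a < b\<close> by (simp_all add: m_def h_def field_simps)
  define H H' where "H x = (G (x + \<delta>) - G x) / \<delta>" and "H' x = (f (x + \<delta>) - f x) / \<delta>" for x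
  have "2 * h * H' m \<le> H (m + h) - H (m - h)"
  proof (rule deriv_midpoint_le_slope_if_simpson_defect_nonneg[OF \<open>0 < h\<close>])
    show "(H has_real_derivative H' x) (at x)" if "x \<in> {m - h..m + h}" for x
    proof -
      have "x \<in> {a..b + \<delta>}" "x + \<delta> \<in> {a..b + \<delta>}"
        using that \<open>0 < \<delta>\<close> ab_mh by auto
      then have "((\<lambda>z. G (z + \<delta>)) has_real_derivative f (x + \<delta>)) (at x)"
        "(G has_real_derivative f x) (at x)"
        by (auto simp: DERIV_shift[symmetric] intro: G)
      then show ?thesis
        unfolding H_def[abs_def] H'_def by (intro DERIV_cdivide DERIV_diff)
    qed
    show "(H' has_real_derivative (g (m + \<delta>) - g m) / \<delta>) (at m)"
    proof -
      have "m \<in> {a..b + \<delta>}" "m + \<delta> \<in> {a..b + \<delta>}"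
        using \<open>0 < h\<close> \<open>0 < \<delta>\<close> ab_mh by auto
      then have "((\<lambda>z. f (z + \<delta>)) has_real_derivative g (m + \<delta>)) (at m)"
        "(f has_real_derivative g m) (at m)"
        by (auto simp: DERIV_shift[symmetric] intro: f)
      then show ?thesis
        unfolding H'_def[abs_def] by (intro DERIV_cdivide DERIV_diff)
    qed
    show "0 \<le> simpson_defect H H' (m - t) (m + t)" if "0 < t" "t \<le> h" for t
      unfolding H_def[abs_def] H'_def[abs_def]
    proof (rule simpson_defect_nonneg_average)
      show "(G has_real_derivative f x) (at x)" "(f has_real_derivative g x) (at x)"
        if "x \<in> {m - t..m + t + \<delta>}" for x
        using that \<open>t \<le> h\<close> ab_mh by (auto intro!: G f)
      show "0 \<le> simpson_defect f g (m - t + \<sigma>) (m + t + \<sigma>)" if "\<sigma> \<in> {0..\<delta>}" for \<sigma>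
        using that \<open>0 < t\<close> \<open>t \<le> h\<close> ab_mh by (intro simpson) auto
    qed (use \<open>0 < \<delta>\<close> \<open>0 < t\<close> in auto)
  qed
  moreover have "b - a = 2 * h"
    by (simp add: h_def)
  ultimately show ?thesis
    unfolding m_def[symmetric] H_def H'_def using ab_mh by simp
qed

lemma primitive_on_neighbourhood:
  fixes f :: "real \<Rightarrow> real"
  assumes J: "connected J" "open J" and f: "continuous_on J f" and ab: "a \<in> J" "b \<in> J"
  obtains p q G where "p < a" "b < q" "{p..q} \<subseteq> J"
    "\<And>x. x \<in> {p<..<q} \<Longrightarrow> (G has_real_derivative f x) (at x)"
proof -
  obtain d d' where "0 < d" "ball a d \<subseteq> J" "0 < d'" "ball b d' \<subseteq> J"
    using openE[OF J(2) ab(1)] openE[OF J(2) ab(2)] by metis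
  then have pq: "a - d / 2 \<in> J" "b + d' / 2 \<in> J"
    by (auto simp: subset_iff dist_real_def)
  define p q where "p = a - d / 2" and "q = b + d' / 2"
  have sub: "{p..q} \<subseteq> J"
    using connected_contains_Icc[OF J(1)] pq unfolding p_def q_def by blast
  have "((\<lambda>x. integral {p..x} f) has_real_derivative f x) (at x)" if "x \<in> {p<..<q}" for x
    using integral_has_real_derivative[OF continuous_on_subset[OF f sub], of x]
      at_within_interior[of x "{p..q}"] that
    by auto
  moreover have "p < a" "b < q"
    using \<open>0 < d\<close> \<open>0 < d'\<close> by (simp_all add: p_def q_def)
  ultimately show ?thesis
    using that sub by blast
qed

lemma simpson_defect_nonneg_imp_deriv_midpoint_le_slope:
  assumes J: "connected J" "open J"
    and der: "\<And>x. x \<in> J \<Longrightarrow> (f has_real_derivative g x) (at x)"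
    and simpson: "\<And>a b. a \<in> J \<Longrightarrow> b \<in> J \<Longrightarrow> a < b \<Longrightarrow> 0 \<le> simpson_defect f g a b"
    and ab: "a \<in> J" "b \<in> J" "a < b"
  shows "g ((a + b) / 2) \<le> (f b - f a) / (b - a)"
proof -
  have "continuous_on J f"
    using der by (intro continuous_at_imp_continuous_on) (auto intro: DERIV_isCont)
  then obtain p q G where pq: "p < a" "b < q" "{p..q} \<subseteq> J"
    and dG: "\<And>x. x \<in> {p<..<q} \<Longrightarrow> (G has_real_derivative f x) (at x)"
    using primitive_on_neighbourhood[OF J _ ab(1,2)] by blast
  then have open_sub: "{p<..<q} \<subseteq> J"
    by (auto simp: subset_iff)
  define m where "m = (a + b) / 2"
  have ev: "\<forall>\<^sub>F \<delta> in at_right 0. (b - a) * ((f (m + \<delta>) - f m) / \<delta>)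
      \<le> (G (b + \<delta>) - G b) / \<delta> - (G (a + \<delta>) - G a) / \<delta>"
    unfolding eventually_at_right_field
  proof (intro exI[of _ "q - b"] conjI allI impI)
    fix \<delta> :: real
    assume \<delta>: "0 < \<delta>" "\<delta> < q - b"
    show "(b - a) * ((f (m + \<delta>) - f m) / \<delta>)
        \<le> (G (b + \<delta>) - G b) / \<delta> - (G (a + \<delta>) - G a) / \<delta>"
      unfolding m_def
    proof (rule averaged_deriv_midpoint_le_slope[where g = g, OF \<delta>(1) ab(3)])
      fix x
      assume "x \<in> {a..b + \<delta>}"
      then have "x \<in> {p<..<q}"
        using pq \<delta> by auto
      with open_sub show "(G has_real_derivative f x) (at x)" "(f has_real_derivative g x) (at x)"
        by (auto intro: dG der)
    next
      fix u v
      assume "a \<le> u" "u < v" "v \<le> b + \<delta>"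
      then have "u \<in> J" "v \<in> J"
        using open_sub pq \<delta> by (auto simp: subset_iff)
      with \<open>u < v\<close> show "0 \<le> simpson_defect f g u v"
        by (intro simpson)
    qed
  qed (use pq in auto)
  have "m \<in> J" "a \<in> {p<..<q}" "b \<in> {p<..<q}"
    using open_sub pq ab by (auto simp: m_def subset_iff)
  then have lim_mid: "((\<lambda>\<delta>. (b - a) * ((f (m + \<delta>) - f m) / \<delta>)) \<longlongrightarrow> (b - a) * g m) (at_right 0)"
    and lim_ends: "((\<lambda>\<delta>. (G (b + \<delta>) - G b) / \<delta> - (G (a + \<delta>) - G a) / \<delta>) \<longlongrightarrow> f b - f a)
      (at_right 0)"
    by (intro tendsto_mult_left tendsto_diff difference_quotient_tendsto_at_right der dG; simp)+
  have "(b - a) * g m \<le> f b - f a"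
    by (rule tendsto_le[OF trivial_limit_at_right_real lim_ends lim_mid ev])
  then show ?thesis
    using ab(3) by (simp add: m_def pos_le_divide_eq mult.commute)
qed

theorem theorem4:
  fixes I :: "real set" and f :: "real \<Rightarrow> real"
  assumes "is_interval I"
    and "continuous_on I f"
    and "\<forall>x\<in>interior I. f differentiable (at x)"
    and "continuous_on (interior I) (deriv f)"
  shows "(convex3_on I f \<longleftrightarrow>
           (\<forall>a\<in>interior I. \<forall>b\<in>interior I. a < b \<longrightarrow>
              deriv f ((a + b) / 2) \<le> (f b - f a) / (b - a)))
       \<and> (convex3_on I f \<longleftrightarrow>
           (\<forall>a\<in>interior I. \<forall>b\<in>interior I. a < b \<longrightarrow>
              (f b - f a) / (b - a) \<le> (1/2) * ((deriv f a + deriv f b) / 2 + deriv f ((a + b) / 2))))"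
proof -
  let ?J = "interior I"
  let ?ii = "\<forall>a\<in>?J. \<forall>b\<in>?J. a < b \<longrightarrow> deriv f ((a + b) / 2) \<le> (f b - f a) / (b - a)"
  let ?iii = "\<forall>a\<in>?J. \<forall>b\<in>?J. a < b \<longrightarrow>
    (f b - f a) / (b - a) \<le> (1/2) * ((deriv f a + deriv f b) / 2 + deriv f ((a + b) / 2))"
  have I: "connected I"
    using assms(1) by (simp add: is_interval_connected_1)
  have J: "connected ?J" "open ?J" "?J \<subseteq> I"
    using assms(1) by (auto simp: is_interval_convex_1 convex_connected interior_subset)
  have der: "\<And>x. x \<in> ?J \<Longrightarrow> (f has_real_derivative deriv f x) (at x)"
    using assms(3) DERIV_deriv_iff_real_differentiable by blast
  have i_ii: "convex3_on I f \<Longrightarrow> ?ii"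
    using convex3_on_imp_deriv_midpoint_le_slope[OF _ J(1,3) der] by blast
  have ii_cvx: "?ii \<Longrightarrow> convex_on ?J (deriv f)"
    using deriv_midpoint_le_slope_imp_convex_deriv[OF J(1) der assms(4)] by blast
  have cvx_i: "convex_on ?J (deriv f) \<Longrightarrow> convex3_on I f"
    by (rule convex_deriv_imp_convex3_on[OF I assms(2) der])
  have cvx_iii: "convex_on ?J (deriv f) \<Longrightarrow> ?iii"
    using convex_deriv_imp_slope_le_simpson[OF J(1) der] by blast
  have iii_ii: "?iii \<Longrightarrow> ?ii"
    using simpson_defect_nonneg_imp_deriv_midpoint_le_slope[OF J(1,2) der]
      slope_le_simpson_iff_simpson_defect_nonneg by blast
  show ?thesis
    using i_ii ii_cvx cvx_i cvx_iii iii_ii by blast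
qed

end
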